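(* Let $\beta\in\mathbb C$ and $m\ge0$. If $\beta$ is reproducible of order $m$ in $\mathcal H$, then $\beta$ is reproducible of order $j$ for every integer $0\le j\le m$.
   Context: Standing assumptions: $\Omega\subset\mathbb C$ is a domain with $0\in\Omega$, and $\mathcal H$ is a Hilbert space of analytic functions on $\Omega$ in which every point evaluation at points of $\Omega$ is bounded; the shift $(Sf)(z)=zf(z)$ is bounded on $\mathcal H$; and the polynomials $\mathcal P$ are dense in $\mathcal H$. A point $\beta\in\mathbb C$ (not necessarily in $\Omega$) is reproducible of order $m\ge0$ in $\mathcal H$ if the linear functional $p\mapsto p^{(m)}(\beta)$ on $\mathcal P$ extends to a bounded linear functional on $\mathcal H$. *)

theory Defs
  imports "HOL-Analysis.Analysis" "HOL-Computational_Algebra.Polynomial"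
begin

text \<open>A Hilbert space of analytic functions on \<Omega> is modelled concretely as a set H of
  functions complex \<Rightarrow> complex (each holomorphic on \<Omega> and normalised to vanish off \<Omega>, so
  that functions agreeing on \<Omega> are identified), together with a complex inner product ip
  on H.\<close>

definition hnorm :: "((complex \<Rightarrow> complex) \<Rightarrow> (complex \<Rightarrow> complex) \<Rightarrow> complex)
    \<Rightarrow> (complex \<Rightarrow> complex) \<Rightarrow> real" where
  "hnorm ip f = sqrt (Re (ip f f))"

definition restr :: "complex set \<Rightarrow> (complex \<Rightarrow> complex) \<Rightarrow> complex \<Rightarrow> complex" where
  "restr \<Omega> f = (\<lambda>z. if z \<in> \<Omega> then f z else 0)"

definition polyH :: "complex set \<Rightarrow> complex poly \<Rightarrow> complex \<Rightarrow> complex" where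
  "polyH \<Omega> p = restr \<Omega> (poly p)"

definition shiftH :: "complex set \<Rightarrow> (complex \<Rightarrow> complex) \<Rightarrow> complex \<Rightarrow> complex" where
  "shiftH \<Omega> f = restr \<Omega> (\<lambda>z. z * f z)"

definition bounded_lin_functional ::
  "(complex \<Rightarrow> complex) set \<Rightarrow> ((complex \<Rightarrow> complex) \<Rightarrow> (complex \<Rightarrow> complex) \<Rightarrow> complex)
    \<Rightarrow> ((complex \<Rightarrow> complex) \<Rightarrow> complex) \<Rightarrow> bool" where
  "bounded_lin_functional H ip L \<longleftrightarrow>
     (\<forall>f\<in>H. \<forall>g\<in>H. L (\<lambda>z. f z + g z) = L f + L g) \<and>
     (\<forall>c. \<forall>f\<in>H. L (\<lambda>z. c * f z) = c * L f) \<and>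
     (\<exists>C. \<forall>f\<in>H. cmod (L f) \<le> C * hnorm ip f)"

definition analytic_hilbert_space ::
  "complex set \<Rightarrow> (complex \<Rightarrow> complex) set
    \<Rightarrow> ((complex \<Rightarrow> complex) \<Rightarrow> (complex \<Rightarrow> complex) \<Rightarrow> complex) \<Rightarrow> bool" where
  "analytic_hilbert_space \<Omega> H ip \<longleftrightarrow>
     \<comment> \<open>\<Omega> is a domain containing 0\<close>
     open \<Omega> \<and> connected \<Omega> \<and> 0 \<in> \<Omega> \<and>
     \<comment> \<open>elements of H are analytic functions on \<Omega>\<close>
     (\<forall>f\<in>H. f holomorphic_on \<Omega> \<and> (\<forall>z. z \<notin> \<Omega> \<longrightarrow> f z = 0)) \<and>
     \<comment> \<open>H is a complex vector space\<close>
     (\<lambda>z. 0) \<in> H \<and>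
     (\<forall>f\<in>H. \<forall>g\<in>H. (\<lambda>z. f z + g z) \<in> H) \<and>
     (\<forall>c. \<forall>f\<in>H. (\<lambda>z. c * f z) \<in> H) \<and>
     \<comment> \<open>ip is an inner product on H\<close>
     (\<forall>f\<in>H. \<forall>g\<in>H. \<forall>h\<in>H. ip (\<lambda>z. f z + g z) h = ip f h + ip g h) \<and>
     (\<forall>c. \<forall>f\<in>H. \<forall>g\<in>H. ip (\<lambda>z. c * f z) g = c * ip f g) \<and>
     (\<forall>f\<in>H. \<forall>g\<in>H. ip g f = cnj (ip f g)) \<and>
     (\<forall>f\<in>H. Im (ip f f) = 0 \<and> Re (ip f f) \<ge> 0) \<and>
     (\<forall>f\<in>H. ip f f = 0 \<longrightarrow> f = (\<lambda>z. 0)) \<and>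
     \<comment> \<open>H is complete\<close>
     (\<forall>s. (\<forall>n. s n \<in> H) \<and>
          (\<forall>e>0. \<exists>N. \<forall>n\<ge>N. \<forall>k\<ge>N. hnorm ip (\<lambda>z. s n z - s k z) < e)
        \<longrightarrow> (\<exists>f\<in>H. (\<lambda>n. hnorm ip (\<lambda>z. s n z - f z)) \<longlonglongrightarrow> 0)) \<and>
     \<comment> \<open>point evaluations at points of \<Omega> are bounded\<close>
     (\<forall>w\<in>\<Omega>. \<exists>C. \<forall>f\<in>H. cmod (f w) \<le> C * hnorm ip f) \<and>
     \<comment> \<open>the shift is a bounded operator on H\<close>
     (\<forall>f\<in>H. shiftH \<Omega> f \<in> H) \<and>
     (\<exists>C. \<forall>f\<in>H. hnorm ip (shiftH \<Omega> f) \<le> C * hnorm ip f) \<and>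
     \<comment> \<open>the polynomials lie in H and are dense\<close>
     (\<forall>p. polyH \<Omega> p \<in> H) \<and>
     (\<forall>f\<in>H. \<forall>e>0. \<exists>p. hnorm ip (\<lambda>z. f z - polyH \<Omega> p z) < e)"

definition reproducible ::
  "complex set \<Rightarrow> (complex \<Rightarrow> complex) set
    \<Rightarrow> ((complex \<Rightarrow> complex) \<Rightarrow> (complex \<Rightarrow> complex) \<Rightarrow> complex) \<Rightarrow> complex \<Rightarrow> nat \<Rightarrow> bool" where
  "reproducible \<Omega> H ip \<beta> m \<longleftrightarrow>
     (\<exists>L. bounded_lin_functional H ip L \<and>
          (\<forall>p. L (polyH \<Omega> p) = poly ((pderiv ^^ m) p) \<beta>))"

end

theory Submission
  imports Defs
begin

text \<open>If p \<mapsto> p^(k+1)(\<beta>) extends to a bounded functional L, then by the Leibniz rule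
  (z p)^(k+1) = z p^(k+1) + (k+1) p^(k) the functional f \<mapsto> (L(S f) - \<beta> L f) / (k+1)
  extends p \<mapsto> p^(k)(\<beta>); it is bounded because the shift S is.\<close>

lemma funpow_pderiv_monom_x_mult:
  "(pderiv ^^ Suc k) ([:0, 1:] * p) =
     [:0, 1:] * (pderiv ^^ Suc k) p + smult (of_nat (Suc k)) ((pderiv ^^ k) p)"
proof (induction k)
  case 0
  show ?case by (simp add: pderiv_mult pderiv_pCons add.commute)
next
  case (Suc k)
  have "(pderiv ^^ Suc (Suc k)) ([:0, 1:] * p) = pderiv ((pderiv ^^ Suc k) ([:0, 1:] * p))"
    by simp
  also have "\<dots> = pderiv ([:0, 1:] * (pderiv ^^ Suc k) p) + smult (of_nat (Suc k)) (pderiv ((pderiv ^^ k) p))"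
    by (simp only: Suc pderiv_add pderiv_smult)
  also have "\<dots> = [:0, 1:] * (pderiv ^^ Suc (Suc k)) p + smult (of_nat (Suc (Suc k))) ((pderiv ^^ Suc k) p)"
    by (simp add: pderiv_mult pderiv_pCons algebra_simps smult_add_left)
  finally show ?case .
qed

lemma bounded_lin_functional_diff:
  assumes "bounded_lin_functional H ip L1" "bounded_lin_functional H ip L2"
  shows "bounded_lin_functional H ip (\<lambda>f. L1 f - L2 f)"
proof -
  from assms obtain C1 C2 where
    "\<forall>f\<in>H. cmod (L1 f) \<le> C1 * hnorm ip f" "\<forall>f\<in>H. cmod (L2 f) \<le> C2 * hnorm ip f"
    unfolding bounded_lin_functional_def by blast
  then have "\<forall>f\<in>H. cmod (L1 f - L2 f) \<le> (C1 + C2) * hnorm ip f"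
    by (smt (verit) distrib_right norm_triangle_ineq4)
  moreover from assms have
    "\<forall>f\<in>H. \<forall>g\<in>H. L1 (\<lambda>z. f z + g z) - L2 (\<lambda>z. f z + g z) = (L1 f - L2 f) + (L1 g - L2 g)"
    "\<forall>c. \<forall>f\<in>H. L1 (\<lambda>z. c * f z) - L2 (\<lambda>z. c * f z) = c * (L1 f - L2 f)"
    unfolding bounded_lin_functional_def by (auto simp: algebra_simps)
  ultimately show ?thesis
    unfolding bounded_lin_functional_def by blast
qed

lemma bounded_lin_functional_scale:
  assumes "bounded_lin_functional H ip L"
  shows "bounded_lin_functional H ip (\<lambda>f. c * L f)"
proof -
  from assms obtain C where "\<forall>f\<in>H. cmod (L f) \<le> C * hnorm ip f"
    unfolding bounded_lin_functional_def by blast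
  then have "\<forall>f\<in>H. cmod (c * L f) \<le> (cmod c * C) * hnorm ip f"
    by (simp add: norm_mult mult.assoc mult_left_mono)
  moreover from assms have
    "\<forall>f\<in>H. \<forall>g\<in>H. c * L (\<lambda>z. f z + g z) = c * L f + c * L g"
    "\<forall>d. \<forall>f\<in>H. c * L (\<lambda>z. d * f z) = d * (c * L f)"
    unfolding bounded_lin_functional_def by (auto simp: algebra_simps)
  ultimately show ?thesis
    unfolding bounded_lin_functional_def by blast
qed

lemma bounded_lin_functional_nonneg_bound:
  assumes "bounded_lin_functional H ip L" "\<forall>f\<in>H. hnorm ip f \<ge> 0"
  obtains C where "C \<ge> 0" "\<forall>f\<in>H. cmod (L f) \<le> C * hnorm ip f"
proof -
  from assms(1) obtain C where C: "\<forall>f\<in>H. cmod (L f) \<le> C * hnorm ip f"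
    unfolding bounded_lin_functional_def by blast
  have "\<forall>f\<in>H. cmod (L f) \<le> max C 0 * hnorm ip f"
    using C assms(2) by (smt (verit) max_def mult_right_mono)
  then show ?thesis using that[of "max C 0"] by simp
qed

lemma bounded_lin_functional_compose:
  assumes L: "bounded_lin_functional H ip L"
    and nonneg: "\<forall>f\<in>H. hnorm ip f \<ge> 0"
    and maps: "\<forall>f\<in>H. T f \<in> H"
    and additive: "\<And>f g. T (\<lambda>z. f z + g z) = (\<lambda>z. T f z + T g z)"
    and homogeneous: "\<And>c f. T (\<lambda>z. c * f z) = (\<lambda>z. c * T f z)"
    and bounded: "\<forall>f\<in>H. hnorm ip (T f) \<le> B * hnorm ip f"
  shows "bounded_lin_functional H ip (\<lambda>f. L (T f))"
proof -
  obtain C where "C \<ge> 0" and C: "\<forall>f\<in>H. cmod (L f) \<le> C * hnorm ip f"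
    using bounded_lin_functional_nonneg_bound[OF L nonneg] .
  have "\<forall>f\<in>H. cmod (L (T f)) \<le> (C * B) * hnorm ip f"
  proof
    fix f assume "f \<in> H"
    have "cmod (L (T f)) \<le> C * hnorm ip (T f)" using C maps \<open>f \<in> H\<close> by blast
    also have "\<dots> \<le> C * (B * hnorm ip f)"
      using bounded \<open>f \<in> H\<close> \<open>C \<ge> 0\<close> by (simp add: mult_left_mono)
    finally show "cmod (L (T f)) \<le> (C * B) * hnorm ip f" by (simp add: mult.assoc)
  qed
  with L maps show ?thesis
    unfolding bounded_lin_functional_def additive homogeneous by auto
qed

lemma shiftH_add: "shiftH \<Omega> (\<lambda>z. f z + g z) = (\<lambda>z. shiftH \<Omega> f z + shiftH \<Omega> g z)"
  by (auto simp: shiftH_def restr_def algebra_simps)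

lemma shiftH_mult: "shiftH \<Omega> (\<lambda>z. c * f z) = (\<lambda>z. c * shiftH \<Omega> f z)"
  by (auto simp: shiftH_def restr_def algebra_simps)

lemma shiftH_polyH: "shiftH \<Omega> (polyH \<Omega> p) = polyH \<Omega> ([:0, 1:] * p)"
  by (auto simp: shiftH_def restr_def polyH_def)

lemma hnorm_nonneg:
  assumes "analytic_hilbert_space \<Omega> H ip" "f \<in> H"
  shows "hnorm ip f \<ge> 0"
proof -
  from assms(1) have "\<forall>f\<in>H. Re (ip f f) \<ge> 0"
    unfolding analytic_hilbert_space_def by blast
  with assms(2) show ?thesis unfolding hnorm_def by simp
qed

lemma bounded_lin_functional_shift:
  assumes A: "analytic_hilbert_space \<Omega> H ip" and L: "bounded_lin_functional H ip L"
  shows "bounded_lin_functional H ip (\<lambda>f. L (shiftH \<Omega> f))"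
proof -
  from A have "\<forall>f\<in>H. shiftH \<Omega> f \<in> H"
    and "\<exists>B. \<forall>f\<in>H. hnorm ip (shiftH \<Omega> f) \<le> B * hnorm ip f"
    unfolding analytic_hilbert_space_def by blast+
  then obtain B where maps: "\<forall>f\<in>H. shiftH \<Omega> f \<in> H"
    and bounded: "\<forall>f\<in>H. hnorm ip (shiftH \<Omega> f) \<le> B * hnorm ip f"
    by blast
  have "\<forall>f\<in>H. hnorm ip f \<ge> 0" using hnorm_nonneg[OF A] by blast
  then show ?thesis
    by (rule bounded_lin_functional_compose[OF L _ maps shiftH_add shiftH_mult bounded])
qed

lemma reproducible_Suc_imp_reproducible:
  assumes A: "analytic_hilbert_space \<Omega> H ip"
    and "reproducible \<Omega> H ip \<beta> (Suc k)"
  shows "reproducible \<Omega> H ip \<beta> k"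
proof -
  from assms(2) obtain L where L: "bounded_lin_functional H ip L"
    and L_poly: "\<And>p. L (polyH \<Omega> p) = poly ((pderiv ^^ Suc k) p) \<beta>"
    unfolding reproducible_def by blast
  define L' where "L' f = inverse (of_nat (Suc k)) * (L (shiftH \<Omega> f) - \<beta> * L f)" for f
  have "bounded_lin_functional H ip (\<lambda>f. L (shiftH \<Omega> f) - \<beta> * L f)"
    using bounded_lin_functional_shift[OF A L] bounded_lin_functional_scale[OF L]
    by (rule bounded_lin_functional_diff)
  then have "bounded_lin_functional H ip L'"
    unfolding L'_def by (rule bounded_lin_functional_scale)
  moreover have "L' (polyH \<Omega> p) = poly ((pderiv ^^ k) p) \<beta>" for p
  proof -
    have "of_nat (Suc k) \<noteq> (0::complex)" by (simp del: of_nat_Suc)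
    then show ?thesis
      unfolding L'_def shiftH_polyH L_poly funpow_pderiv_monom_x_mult
      by (simp add: field_simps del: funpow.simps of_nat_Suc)
  qed
  ultimately show ?thesis unfolding reproducible_def by blast
qed

theorem mainTheorem3:
  fixes \<Omega> :: "complex set" and H :: "(complex \<Rightarrow> complex) set"
    and ip :: "(complex \<Rightarrow> complex) \<Rightarrow> (complex \<Rightarrow> complex) \<Rightarrow> complex"
    and \<beta> :: complex and m :: nat
  assumes "analytic_hilbert_space \<Omega> H ip"
    and "reproducible \<Omega> H ip \<beta> m"
  shows "\<forall>j\<le>m. reproducible \<Omega> H ip \<beta> j"
proof (intro allI impI)
  fix j assume "j \<le> m"
  then show "reproducible \<Omega> H ip \<beta> j"
  proof (induction j rule: inc_induct)
    case base
    show ?case by (fact assms(2))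
  next
    case (step n)
    from \<open>reproducible \<Omega> H ip \<beta> (Suc n)\<close> show ?case
      by (rule reproducible_Suc_imp_reproducible[OF assms(1)])
  qed
qed

end
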